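(* Let $R$ be a commutative ring and let $\mathcal X'(R):=\mathcal X'(\mathrm{Spec}(R))$. Then the map $$\mathscr J:\mathcal X'(R)^{\mathrm{zar}}\to\mathrm{Rd}(R)^{\mathrm{inv}},\qquad C\mapsto\bigcap\{P\in\mathrm{Spec}(R)\mid P\in C\}$$ is a homeomorphism. In particular, $\mathcal X'(R)$ with the Zariski topology is a spectral space. Moreover, the same map $\mathscr J$ is a homeomorphism between $\mathcal X'(R)^{\mathrm{inv}}$ and $\mathrm{Rd}(R)^{\mathrm{hk}}$.
   Context: For a spectral space $X$, $\mathcal X'(X)$ is the set of nonempty closed subsets of $X$, with the Zariski topology having as basis of open sets $\mathcal U'(\Omega):=\{Y\in\mathcal X'(X)\mid Y\cap\Omega=\emptyset\}$, $\Omega$ ranging over quasi-compact open subsets of $X$; $\mathrm{Spec}(R)$ carries the Zariski topology. $\mathrm{Rd}(R)$ is the set of proper radical ideals of $R$; $\mathrm{Rd}(R)^{\mathrm{hk}}$ denotes it with the hull-kernel topology, whose subbasis of closed sets consists of the sets $\{H\in\mathrm{Rd}(R)\mid x_1,\dots,x_n\in H\}$ for $x_1,\dots,x_n\in R$ (with this topology it is spectral). For a spectral space $Y$, $Y^{\mathrm{inv}}$ denotes $Y$ with the inverse topology, having the quasi-compact open subsets of $Y$ as a basis of closed sets. *)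

theory Defs
  imports "HOL-Analysis.Analysis"
begin

definition ring_ideal :: "'a::comm_ring_1 set \<Rightarrow> bool" where
  "ring_ideal I \<longleftrightarrow> 0 \<in> I \<and> (\<forall>x\<in>I. \<forall>y\<in>I. x + y \<in> I) \<and> (\<forall>r. \<forall>x\<in>I. r * x \<in> I)"

definition prime_ideal :: "'a::comm_ring_1 set \<Rightarrow> bool" where
  "prime_ideal P \<longleftrightarrow> ring_ideal P \<and> P \<noteq> UNIV \<and> (\<forall>a b. a * b \<in> P \<longrightarrow> a \<in> P \<or> b \<in> P)"

definition radical_ideal :: "'a::comm_ring_1 set \<Rightarrow> bool" where
  "radical_ideal I \<longleftrightarrow> ring_ideal I \<and> (\<forall>x (n::nat). x ^ n \<in> I \<longrightarrow> x \<in> I)"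

definition Spec :: "'a::comm_ring_1 set set" where
  "Spec = {P. prime_ideal P}"

definition zariski_Spec :: "'a::comm_ring_1 set topology" where
  "zariski_Spec = topology_generated_by {Spec - {P \<in> Spec. S \<subseteq> P} | S. True}"

definition Rd :: "'a::comm_ring_1 set set" where
  "Rd = {H. radical_ideal H \<and> H \<noteq> UNIV}"

definition hk_Rd :: "'a::comm_ring_1 set topology" where
  "hk_Rd = topology_generated_by {Rd - {H \<in> Rd. F \<subseteq> H} | F. finite F}"

definition qc_open :: "'b topology \<Rightarrow> 'b set \<Rightarrow> bool" where
  "qc_open X U \<longleftrightarrow> openin X U \<and> compactin X U"

definition inverse_topology :: "'b topology \<Rightarrow> 'b topology" where
  "inverse_topology X = topology_generated_by {topspace X - U | U. qc_open X U}"

definition Xprime :: "'b topology \<Rightarrow> 'b set set" where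
  "Xprime X = {C. closedin X C \<and> C \<noteq> {}}"

definition Xprime_zar :: "'b topology \<Rightarrow> 'b set topology" where
  "Xprime_zar X = topology_generated_by ((\<lambda>W. {Y \<in> Xprime X. Y \<inter> W = {}}) ` {W. qc_open X W})"

definition irreducible_in :: "'b topology \<Rightarrow> 'b set \<Rightarrow> bool" where
  "irreducible_in X C \<longleftrightarrow> C \<subseteq> topspace X \<and> C \<noteq> {} \<and>
     (\<forall>A B. closedin X A \<and> closedin X B \<and> C \<subseteq> A \<union> B \<longrightarrow> C \<subseteq> A \<or> C \<subseteq> B)"

definition spectral_space :: "'b topology \<Rightarrow> bool" where
  "spectral_space X \<longleftrightarrow>
     compact_space X \<and> t0_space X \<and>
     (\<forall>U V. qc_open X U \<and> qc_open X V \<longrightarrow> qc_open X (U \<inter> V)) \<and>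
     (\<forall>U x. openin X U \<and> x \<in> U \<longrightarrow> (\<exists>V. qc_open X V \<and> x \<in> V \<and> V \<subseteq> U)) \<and>
     (\<forall>C. closedin X C \<and> irreducible_in X C \<longrightarrow> (\<exists>!x. x \<in> C \<and> X closure_of {x} = C))"

end

theory Submission
  imports Defs
begin

text \<open>A nonempty closed subset \<open>C\<close> of \<open>Spec R\<close> is \<open>V(\<Inter>C)\<close>, and \<open>\<Inter>C\<close> is a proper radical
  ideal; conversely, by Krull, every proper radical ideal is the intersection of the primes
  containing it. So \<open>C \<mapsto> \<Inter>C\<close> is a bijection onto \<open>Rd(R)\<close> with inverse \<open>H \<mapsto> V(H)\<close>. The
  quasi-compact opens of \<open>Spec R\<close> are the sets \<open>Spec R - V(F)\<close> with \<open>F\<close> finite, and the basic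
  open set of \<open>X'(R)\<close> attached to such a set corresponds to \<open>{H. F \<subseteq> H}\<close>. These sets are a basis of
  a topology on \<open>Rd(R)\<close> whose quasi-compact opens are their finite unions; comparing
  quasi-compact opens shows that it is the inverse of the hull-kernel topology and vice versa.
  Quasi-compactness in both directions rests on one algebraic fact: if \<open>F\<close> lies in every prime
  containing \<open>S\<close>, then \<open>F\<close> lies in the radical of a finite subset of \<open>S\<close>. This topology is
  spectral, the generic point of an irreducible closed set being its union, and spectrality as
  well as inverse topologies transfer along homeomorphisms.\<close>

section \<open>Generated topologies, inverse topologies and spectral spaces\<close>

lemma compactin_topology_generated_by:
  assumes A: "A \<subseteq> \<Union>S"
    and fin: "\<And>C. C \<subseteq> S \<Longrightarrow> A \<subseteq> \<Union>C \<Longrightarrow> \<exists>C'. finite C' \<and> C' \<subseteq> C \<and> A \<subseteq> \<Union>C'"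
  shows "compactin (topology_generated_by S) A"
proof -
  define Q where "Q = ((finite' intersection_of (\<lambda>x. x \<in> S)) relative_to A)"
  have op0: "openin (topology_generated_by S) = generate_topology_on S"
    by (rule ext) (rule openin_topology_generated_by_iff)
  have op: "openin (topology_generated_by S) = arbitrary union_of (finite' intersection_of (\<lambda>x. x \<in> S))"
    unfolding op0 by (rule generate_topology_on_eq)
  have "openin (subtopology (topology_generated_by S) A) = arbitrary union_of Q"
    unfolding Q_def by (simp add: openin_relative_to[symmetric] op arbitrary_union_of_relative_to)
  then have sub: "subtopology (topology_generated_by S) A = topology (arbitrary union_of Q)"
    by (metis openin_inverse)
  txt \<open>The library's subbase theorem is phrased for the subbase topology relative to \<open>A\<close>,
    which coincides with the subspace topology.\<close>
  have eqT: "topology (arbitrary union_of (finite intersection_of (\<lambda>x. x \<in> S) relative_to A))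
      = subtopology (topology_generated_by S) A"
    unfolding sub
  proof (rule topology_bases_eq)
    fix U x assume U: "(finite intersection_of (\<lambda>x. x \<in> S) relative_to A) U" and x: "x \<in> U"
    then obtain F where F: "finite F" "F \<subseteq> S" "U = A \<inter> \<Inter>F"
      by (auto simp: relative_to_def intersection_of_def)
    show "\<exists>V. Q V \<and> x \<in> V \<and> V \<subseteq> U"
    proof (cases "F = {}")
      case True
      then have "x \<in> A" using F x by auto
      then obtain s where s: "s \<in> S" "x \<in> s" using A by blast
      have "Q (A \<inter> s)" unfolding Q_def relative_to_def intersection_of_def
        by (rule exI[of _ s]) (use s in auto)
      then show ?thesis using s \<open>x \<in> A\<close> F True by (intro exI[of _ "A \<inter> s"]) auto
    next
      case False
      have "Q U" unfolding Q_def relative_to_def intersection_of_def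
        by (rule exI[of _ "\<Inter>F"]) (use F False in auto)
      then show ?thesis using x by blast
    qed
  next
    fix V x assume "Q V" "x \<in> V"
    then show "\<exists>U. (finite intersection_of (\<lambda>x. x \<in> S) relative_to A) U \<and> x \<in> U \<and> U \<subseteq> V"
      unfolding Q_def relative_to_def intersection_of_def by blast
  qed
  have "compact_space (subtopology (topology_generated_by S) A)"
    by (rule Alexander_subbase_alt[OF A fin eqT]) auto
  then show ?thesis using A by (simp add: compactin_subspace)
qed

lemma topology_generated_by_eq:
  assumes "\<And>a. a \<in> \<A> \<Longrightarrow> openin (topology_generated_by \<B>) a"
      and "\<And>b. b \<in> \<B> \<Longrightarrow> openin (topology_generated_by \<A>) b"
  shows "topology_generated_by \<A> = topology_generated_by \<B>"
proof -
  have "generate_topology_on \<B> s" if "generate_topology_on \<A> s" for s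
    using generate_topology_on_coarsest[OF istopology_generate_topology_on _ that] assms(1)
    by (simp add: openin_topology_generated_by_iff)
  moreover have "generate_topology_on \<A> s" if "generate_topology_on \<B> s" for s
    using generate_topology_on_coarsest[OF istopology_generate_topology_on _ that] assms(2)
    by (simp add: openin_topology_generated_by_iff)
  ultimately show ?thesis
    by (auto simp: topology_eq openin_topology_generated_by_iff)
qed

lemma topspace_inverse_topology: "topspace (inverse_topology X) = topspace X"
proof -
  have "qc_open X {}" by (simp add: qc_open_def)
  then have "\<Union>{topspace X - U | U. qc_open X U} = topspace X" by blast
  then show ?thesis by (simp add: inverse_topology_def)
qed

lemma qc_open_homeomorphic_map_image:
  assumes "homeomorphic_map X Y f" "U \<subseteq> topspace X"
  shows "qc_open Y (f ` U) \<longleftrightarrow> qc_open X U"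
  using homeomorphic_map_openness[OF assms] homeomorphic_map_compactness[OF assms]
  by (simp add: qc_open_def)

lemma continuous_map_inverse_topology:
  assumes f: "homeomorphic_map X Y f"
  shows "continuous_map (inverse_topology X) (inverse_topology Y) f"
  unfolding inverse_topology_def[of Y] continuous_on_generated_topo_iff
proof (intro conjI allI impI)
  have fX: "f ` topspace X = topspace Y" using f by (simp add: homeomorphic_imp_surjective_map)
  fix W assume "W \<in> {topspace Y - U | U. qc_open Y U}"
  then obtain U where W: "W = topspace Y - U" and "qc_open Y U" by blast
  define U' where "U' = {x \<in> topspace X. f x \<in> U}"
  have "U \<subseteq> topspace Y" using \<open>qc_open Y U\<close> by (simp add: qc_open_def openin_subset)
  then have "f ` U' = U" using fX by (auto simp: U'_def)
  then have "qc_open X U'"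
    using qc_open_homeomorphic_map_image[OF f, of U'] \<open>qc_open Y U\<close> by (simp add: U'_def)
  then have "openin (inverse_topology X) (topspace X - U')"
    unfolding inverse_topology_def by (intro topology_generated_by_Basis) blast
  moreover have "f -` W \<inter> topspace (inverse_topology X) = topspace X - U'"
    using fX by (auto simp: W U'_def topspace_inverse_topology)
  ultimately show "openin (inverse_topology X) (f -` W \<inter> topspace (inverse_topology X))" by simp
next
  show "f ` topspace (inverse_topology X) \<subseteq> \<Union>{topspace Y - U | U. qc_open Y U}"
  proof -
    have "\<Union>{topspace Y - U | U. qc_open Y U} = topspace Y"
      using topspace_inverse_topology[of Y] by (simp add: inverse_topology_def)
    then show ?thesis using f by (simp add: topspace_inverse_topology homeomorphic_imp_surjective_map)
  qed
qed

lemma homeomorphic_map_inverse_topology: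
  assumes "homeomorphic_map X Y f"
  shows "homeomorphic_map (inverse_topology X) (inverse_topology Y) f"
proof -
  obtain g where g: "homeomorphic_maps X Y f g" using assms homeomorphic_map_maps by blast
  then have "homeomorphic_map Y X g" by (simp add: homeomorphic_maps_map)
  then have "homeomorphic_maps (inverse_topology X) (inverse_topology Y) f g"
    using g continuous_map_inverse_topology[OF assms] continuous_map_inverse_topology[of Y X g]
    by (simp add: homeomorphic_maps_def topspace_inverse_topology)
  then show ?thesis using homeomorphic_map_maps by blast
qed

lemma irreducible_in_continuous_image:
  assumes f: "continuous_map X Y f" and C: "irreducible_in X C"
  shows "irreducible_in Y (f ` C)"
  unfolding irreducible_in_def
proof (intro conjI allI impI)
  have "C \<subseteq> topspace X" "C \<noteq> {}" using C by (auto simp: irreducible_in_def)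
  then show "f ` C \<subseteq> topspace Y" "f ` C \<noteq> {}"
    using f continuous_map_image_subset_topspace by blast+
  fix A B assume AB: "closedin Y A \<and> closedin Y B \<and> f ` C \<subseteq> A \<union> B"
  then have "closedin X {x \<in> topspace X. f x \<in> A}" "closedin X {x \<in> topspace X. f x \<in> B}"
    using f closedin_continuous_map_preimage by blast+
  moreover have "C \<subseteq> {x \<in> topspace X. f x \<in> A} \<union> {x \<in> topspace X. f x \<in> B}"
    using AB \<open>C \<subseteq> topspace X\<close> by blast
  ultimately show "f ` C \<subseteq> A \<or> f ` C \<subseteq> B"
    using C unfolding irreducible_in_def by blast
qed

lemma generic_point_homeomorphic_preimage:
  assumes g: "homeomorphic_map Y X g" and "closedin Y C"
    and X_generic: "\<exists>!x. x \<in> g ` C \<and> X closure_of {x} = g ` C"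
  shows "\<exists>!y. y \<in> C \<and> Y closure_of {y} = C"
proof -
  have "C \<subseteq> topspace Y" using \<open>closedin Y C\<close> closedin_subset by blast
  have inj: "inj_on g (topspace Y)" using g homeomorphic_imp_injective_map by blast
  have generic_iff: "y \<in> C \<and> Y closure_of {y} = C \<longleftrightarrow> g y \<in> g ` C \<and> X closure_of {g y} = g ` C"
    if "y \<in> topspace Y" for y
  proof -
    have "X closure_of {g y} = g ` (Y closure_of {y})"
      using homeomorphic_map_closure_of[OF g, of "{y}"] that by simp
    moreover have "g ` (Y closure_of {y}) = g ` C \<longleftrightarrow> Y closure_of {y} = C"
      using inj closure_of_subset_topspace \<open>C \<subseteq> topspace Y\<close> by (rule inj_on_image_eq_iff)
    moreover have "g y \<in> g ` C \<longleftrightarrow> y \<in> C"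
      using inj that \<open>C \<subseteq> topspace Y\<close> by (rule inj_on_image_mem_iff)
    ultimately show ?thesis by simp
  qed
  obtain x where x: "x \<in> g ` C" "X closure_of {x} = g ` C"
    and x_unique: "\<And>x'. x' \<in> g ` C \<Longrightarrow> X closure_of {x'} = g ` C \<Longrightarrow> x' = x"
    using X_generic by metis
  then obtain y where "y \<in> C" "x = g y" by blast
  show ?thesis
  proof (rule ex1I[of _ y])
    have "y \<in> topspace Y" using \<open>y \<in> C\<close> \<open>C \<subseteq> topspace Y\<close> by blast
    then show "y \<in> C \<and> Y closure_of {y} = C"
      using generic_iff x \<open>x = g y\<close> by simp
  next
    fix y' assume y': "y' \<in> C \<and> Y closure_of {y'} = C"
    then have "y' \<in> topspace Y" using \<open>C \<subseteq> topspace Y\<close> by blast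
    then have "g y' \<in> g ` C" "X closure_of {g y'} = g ` C" using generic_iff y' by simp_all
    then have "g y' = g y" using x_unique \<open>x = g y\<close> by simp
    moreover have "y \<in> topspace Y" using \<open>y \<in> C\<close> \<open>C \<subseteq> topspace Y\<close> by blast
    ultimately show "y' = y" using inj \<open>y' \<in> topspace Y\<close> by (simp add: inj_on_eq_iff)
  qed
qed

lemma spectral_space_homeomorphic_image:
  assumes f: "homeomorphic_map X Y f" and X: "spectral_space X"
  shows "spectral_space Y"
proof -
  obtain g where "homeomorphic_maps X Y f g" using f homeomorphic_map_maps by blast
  then have g: "homeomorphic_map Y X g" and fg: "\<And>y. y \<in> topspace Y \<Longrightarrow> f (g y) = y"
    by (auto simp: homeomorphic_maps_map)
  have qc_g: "qc_open X (g ` U) \<longleftrightarrow> qc_open Y U" if "U \<subseteq> topspace Y" for U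
    using qc_open_homeomorphic_map_image[OF g that] .
  have qc_sub: "qc_open Y U \<Longrightarrow> U \<subseteq> topspace Y" for U
    by (simp add: qc_open_def openin_subset)
  have X_Int: "\<And>U V. qc_open X U \<Longrightarrow> qc_open X V \<Longrightarrow> qc_open X (U \<inter> V)"
    and X_basis: "\<And>U x. openin X U \<Longrightarrow> x \<in> U \<Longrightarrow> \<exists>V. qc_open X V \<and> x \<in> V \<and> V \<subseteq> U"
    and X_generic: "\<And>C. closedin X C \<Longrightarrow> irreducible_in X C \<Longrightarrow> \<exists>!x. x \<in> C \<and> X closure_of {x} = C"
    using X by (simp_all add: spectral_space_def)
  show ?thesis
    unfolding spectral_space_def
  proof (intro conjI allI impI)
    have hs: "X homeomorphic_space Y"
      unfolding homeomorphic_space using f by (rule exI[of "homeomorphic_map X Y" f])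
    have "compact_space X" "t0_space X" using X by (simp_all add: spectral_space_def)
    then show "compact_space Y" "t0_space Y"
      using homeomorphic_compact_space[OF hs] homeomorphic_t0_space[OF hs] by simp_all
  next
    fix U V assume "qc_open Y U \<and> qc_open Y V"
    then have "qc_open Y U" "qc_open Y V" "U \<subseteq> topspace Y" "V \<subseteq> topspace Y"
      using qc_sub by auto
    then have "qc_open X (g ` U \<inter> g ` V)"
      using qc_g by (simp add: X_Int)
    moreover have "g ` U \<inter> g ` V = g ` (U \<inter> V)"
      using inj_on_image_Int[OF homeomorphic_imp_injective_map[OF g]]
        \<open>U \<subseteq> topspace Y\<close> \<open>V \<subseteq> topspace Y\<close> by simp
    moreover have "U \<inter> V \<subseteq> topspace Y" using \<open>U \<subseteq> topspace Y\<close> by blast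
    ultimately show "qc_open Y (U \<inter> V)" using qc_g by simp
  next
    fix U y assume Uy: "openin Y U \<and> y \<in> U"
    then have "U \<subseteq> topspace Y" by (simp add: openin_subset)
    then have "openin X (g ` U)" "g y \<in> g ` U"
      using Uy homeomorphic_map_openness[OF g] by auto
    then obtain V where V: "qc_open X V" "g y \<in> V" "V \<subseteq> g ` U"
      using X_basis by blast
    then have "qc_open Y (f ` V)"
      using qc_open_homeomorphic_map_image[OF f] by (simp add: qc_open_def openin_subset)
    moreover have "y \<in> f ` V" "f ` V \<subseteq> U"
      using V fg Uy \<open>U \<subseteq> topspace Y\<close> by (force, force)
    ultimately show "\<exists>V. qc_open Y V \<and> y \<in> V \<and> V \<subseteq> U" by blast
  next
    fix C assume C: "closedin Y C \<and> irreducible_in Y C"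
    then have "closedin X (g ` C)" "irreducible_in X (g ` C)"
      using homeomorphic_map_closedness[OF g] closedin_subset
        irreducible_in_continuous_image[OF homeomorphic_imp_continuous_map[OF g]] by auto
    then show "\<exists>!y. y \<in> C \<and> Y closure_of {y} = C"
      using C X_generic by (intro generic_point_homeomorphic_preimage[OF g]) auto
  qed
qed

section \<open>Ideals, primes and radicals\<close>

lemma ring_ideal_zero: "ring_ideal I \<Longrightarrow> 0 \<in> I"
  by (simp add: ring_ideal_def)

lemma ring_ideal_add: "ring_ideal I \<Longrightarrow> x \<in> I \<Longrightarrow> y \<in> I \<Longrightarrow> x + y \<in> I"
  by (simp add: ring_ideal_def)

lemma ring_ideal_mult_left: "ring_ideal I \<Longrightarrow> x \<in> I \<Longrightarrow> r * x \<in> I"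
  by (simp add: ring_ideal_def)

lemma ring_ideal_mult_right: "ring_ideal I \<Longrightarrow> x \<in> I \<Longrightarrow> x * r \<in> I"
  by (metis ring_ideal_mult_left mult.commute)

lemma ring_ideal_one_iff: "ring_ideal I \<Longrightarrow> 1 \<in> I \<longleftrightarrow> I = UNIV"
  using ring_ideal_mult_left[of I 1] by auto

lemma ring_ideal_Inter: "\<forall>I\<in>\<I>. ring_ideal I \<Longrightarrow> ring_ideal (\<Inter>\<I>)"
  by (auto simp: ring_ideal_def)

lemma ring_ideal_Union:
  assumes "\<I> \<noteq> {}" "\<forall>I\<in>\<I>. ring_ideal I"
    and directed: "\<forall>x\<in>\<Union>\<I>. \<forall>y\<in>\<Union>\<I>. \<exists>I\<in>\<I>. x \<in> I \<and> y \<in> I"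
  shows "ring_ideal (\<Union>\<I>)"
  unfolding ring_ideal_def
proof (intro conjI ballI allI)
  show "0 \<in> \<Union>\<I>" using assms(1,2) ring_ideal_zero by blast
next
  fix x y assume "x \<in> \<Union>\<I>" "y \<in> \<Union>\<I>"
  then show "x + y \<in> \<Union>\<I>" using directed assms(2) ring_ideal_add by blast
next
  fix r x assume "x \<in> \<Union>\<I>"
  then show "r * x \<in> \<Union>\<I>" using assms(2) ring_ideal_mult_left by blast
qed

lemma prime_imp_radical_ideal: "prime_ideal P \<Longrightarrow> radical_ideal P"
proof -
  assume P: "prime_ideal P"
  have "x ^ n \<in> P \<Longrightarrow> x \<in> P" for x n
  proof (induction n)
    case 0 then show ?case using P ring_ideal_one_iff by (auto simp: prime_ideal_def)
  next
    case (Suc n) then show ?case using P by (auto simp: prime_ideal_def)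
  qed
  then show ?thesis using P by (auto simp: radical_ideal_def prime_ideal_def)
qed

lemma ring_ideal_plus_multiples:
  assumes M: "ring_ideal M"
  shows "ring_ideal {m + r * a | m r. m \<in> M}"
  unfolding ring_ideal_def
proof (intro conjI ballI allI)
  have "0 = 0 + 0 * a" "0 \<in> M" using M ring_ideal_zero by auto
  then show "0 \<in> {m + r * a | m r. m \<in> M}" by blast
next
  fix x y assume "x \<in> {m + r * a | m r. m \<in> M}" "y \<in> {m + r * a | m r. m \<in> M}"
  then obtain m1 r1 m2 r2 where "x = m1 + r1 * a" "y = m2 + r2 * a" "m1 \<in> M" "m2 \<in> M"
    by auto
  then have "x + y = (m1 + m2) + (r1 + r2) * a" "m1 + m2 \<in> M"
    using M by (simp_all add: ring_ideal_add algebra_simps)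
  then show "x + y \<in> {m + r * a | m r. m \<in> M}" by blast
next
  fix s x assume "x \<in> {m + r * a | m r. m \<in> M}"
  then obtain m1 r1 where "x = m1 + r1 * a" "m1 \<in> M" by auto
  then have "s * x = s * m1 + (s * r1) * a" "s * m1 \<in> M"
    using M by (simp_all add: ring_ideal_mult_right algebra_simps)
  then show "s * x \<in> {m + r * a | m r. m \<in> M}" by blast
qed

text \<open>Krull's argument: if \<open>a, b \<notin> M\<close>, maximality puts powers of \<open>f\<close> into \<open>M + R a\<close> and
  \<open>M + R b\<close>, and their product lies in \<open>M\<close> as soon as \<open>a b \<in> M\<close>.\<close>

lemma maximal_avoiding_powers_imp_prime:
  assumes M: "ring_ideal M" "\<forall>n. f ^ n \<notin> M"
    and max: "\<And>J. ring_ideal J \<Longrightarrow> M \<subseteq> J \<Longrightarrow> \<forall>n. f ^ n \<notin> J \<Longrightarrow> J = M"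
  shows "prime_ideal M"
proof -
  have reach: "\<exists>n r m. m \<in> M \<and> f ^ n = m + r * a" if "a \<notin> M" for a
  proof -
    define J where "J = {m + r * a | m r. m \<in> M}"
    have "x = x + 0 * a" for x by simp
    then have "M \<subseteq> J" unfolding J_def by blast
    have "a = 0 + 1 * a" "0 \<in> M" using M(1) ring_ideal_zero by auto
    then have "a \<in> J" unfolding J_def by blast
    then have "J \<noteq> M" using that by blast
    then obtain n where "f ^ n \<in> J"
      using max ring_ideal_plus_multiples[OF M(1)] \<open>M \<subseteq> J\<close> unfolding J_def by blast
    then show ?thesis unfolding J_def by auto
  qed
  have "a \<in> M \<or> b \<in> M" if "a * b \<in> M" for a b
  proof (rule ccontr)
    assume "\<not> (a \<in> M \<or> b \<in> M)"
    then obtain n1 r1 m1 n2 r2 m2 where "m1 \<in> M" "f ^ n1 = m1 + r1 * a"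
      and "m2 \<in> M" "f ^ n2 = m2 + r2 * b"
      using reach by meson
    then have "f ^ (n1 + n2) = m1 * (m2 + r2 * b) + (r1 * a) * m2 + (r1 * r2) * (a * b)"
      by (simp add: power_add algebra_simps)
    also have "\<dots> \<in> M"
      using M(1) \<open>m1 \<in> M\<close> \<open>m2 \<in> M\<close> that
      by (intro ring_ideal_add) (auto simp: ring_ideal_mult_left ring_ideal_mult_right)
    finally show False using M(2) by blast
  qed
  moreover have "M \<noteq> UNIV" using M(2) by auto
  ultimately show ?thesis using M(1) by (auto simp: prime_ideal_def)
qed

lemma prime_ideal_avoiding_powers:
  assumes I: "ring_ideal I" and f: "\<forall>n. f ^ n \<notin> I"
  obtains P where "prime_ideal P" "I \<subseteq> P" "f \<notin> P"
proof -
  define \<Z> where "\<Z> = {J. ring_ideal J \<and> I \<subseteq> J \<and> (\<forall>n. f ^ n \<notin> J)}"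
  have "\<Union>\<C> \<in> \<Z>" if "\<C> \<noteq> {}" "subset.chain \<Z> \<C>" for \<C>
  proof -
    have CZ: "\<C> \<subseteq> \<Z>" and chain: "\<forall>A\<in>\<C>. \<forall>B\<in>\<C>. A \<subseteq> B \<or> B \<subseteq> A"
      using that by (auto simp: subset.chain_def)
    have "ring_ideal (\<Union>\<C>)"
    proof (rule ring_ideal_Union)
      show "\<forall>I\<in>\<C>. ring_ideal I" using CZ by (auto simp: \<Z>_def)
      show "\<forall>x\<in>\<Union>\<C>. \<forall>y\<in>\<Union>\<C>. \<exists>I\<in>\<C>. x \<in> I \<and> y \<in> I"
        using chain by blast
    qed fact
    then show ?thesis using that by (auto simp: \<Z>_def subset.chain_def)
  qed
  moreover have "\<Z> \<noteq> {}" using I f by (auto simp: \<Z>_def)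
  ultimately obtain M where "M \<in> \<Z>" and max: "\<forall>J\<in>\<Z>. M \<subseteq> J \<longrightarrow> J = M"
    using subset_Zorn_nonempty[of \<Z>] by blast
  then have M: "ring_ideal M" "I \<subseteq> M" "\<forall>n. f ^ n \<notin> M" by (auto simp: \<Z>_def)
  have "prime_ideal M"
    using M(1,3) max M(2) by (intro maximal_avoiding_powers_imp_prime) (auto simp: \<Z>_def)
  moreover have "f \<notin> M" using M(3)[rule_format, of 1] by simp
  ultimately show ?thesis using that M(2) by blast
qed

lemma ring_ideal_hull: "ring_ideal (ring_ideal hull S)"
  by (rule hull_in) (simp add: ring_ideal_Inter)

lemma in_ideal_hull_finite_subset:
  assumes "x \<in> ring_ideal hull S"
  obtains F where "finite F" "F \<subseteq> S" "x \<in> ring_ideal hull F"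
proof -
  define \<J> where "\<J> = {ring_ideal hull F | F. finite F \<and> F \<subseteq> S}"
  have "ring_ideal (\<Union>\<J>)"
  proof (rule ring_ideal_Union)
    show "\<J> \<noteq> {}" "\<forall>I\<in>\<J>. ring_ideal I"
      unfolding \<J>_def using ring_ideal_hull by blast+
    show "\<forall>x\<in>\<Union>\<J>. \<forall>y\<in>\<Union>\<J>. \<exists>I\<in>\<J>. x \<in> I \<and> y \<in> I"
    proof (intro ballI)
      fix x y assume "x \<in> \<Union>\<J>" "y \<in> \<Union>\<J>"
      then obtain F G where "finite F" "F \<subseteq> S" "x \<in> ring_ideal hull F"
        and "finite G" "G \<subseteq> S" "y \<in> ring_ideal hull G"
        unfolding \<J>_def by blast
      then show "\<exists>I\<in>\<J>. x \<in> I \<and> y \<in> I"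
        unfolding \<J>_def using hull_mono[of F "F \<union> G" ring_ideal] hull_mono[of G "F \<union> G" ring_ideal]
        by (intro bexI[of _ "ring_ideal hull (F \<union> G)"]) auto
    qed
  qed
  moreover have "S \<subseteq> \<Union>\<J>"
    unfolding \<J>_def using hull_subset[of "{s}" ring_ideal for s] by blast
  ultimately have "ring_ideal hull S \<subseteq> \<Union>\<J>" by (rule hull_minimal[rotated])
  then show ?thesis using assms that unfolding \<J>_def by blast
qed

lemma power_in_ideal_hull_if_in_primes:
  assumes "\<forall>P\<in>Spec. S \<subseteq> P \<longrightarrow> f \<in> P"
  obtains n where "f ^ n \<in> ring_ideal hull S"
proof -
  have "\<exists>n. f ^ n \<in> ring_ideal hull S"
  proof (rule ccontr)
    assume "\<nexists>n. f ^ n \<in> ring_ideal hull S"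
    then obtain P where "prime_ideal P" "ring_ideal hull S \<subseteq> P" "f \<notin> P"
      using prime_ideal_avoiding_powers[OF ring_ideal_hull] by blast
    then show False using assms hull_subset[of S ring_ideal] by (auto simp: Spec_def)
  qed
  then show ?thesis using that by blast
qed

lemma radical_ideal_power: "radical_ideal H \<Longrightarrow> x ^ n \<in> H \<Longrightarrow> x \<in> H"
  by (auto simp: radical_ideal_def)

text \<open>Each \<open>f \<in> F\<close> has a power in the ideal generated by \<open>\<Union>\<S>\<close>, and that membership
  involves only finitely many generators.\<close>

lemma finite_radical_subcover:
  assumes "finite F" and primes: "\<forall>P\<in>Spec. \<Union>\<S> \<subseteq> P \<longrightarrow> F \<subseteq> P"
  obtains \<S>' where "finite \<S>'" "\<S>' \<subseteq> \<S>" "\<forall>H. radical_ideal H \<and> \<Union>\<S>' \<subseteq> H \<longrightarrow> F \<subseteq> H"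
proof -
  have "\<forall>f\<in>F. \<exists>\<S>'. finite \<S>' \<and> \<S>' \<subseteq> \<S> \<and> (\<forall>H. radical_ideal H \<and> \<Union>\<S>' \<subseteq> H \<longrightarrow> f \<in> H)"
  proof
    fix f assume "f \<in> F"
    have "\<forall>P\<in>Spec. \<Union>\<S> \<subseteq> P \<longrightarrow> f \<in> P" using primes \<open>f \<in> F\<close> by (meson subsetD)
    then obtain n where "f ^ n \<in> ring_ideal hull \<Union>\<S>"
      by (rule power_in_ideal_hull_if_in_primes)
    then obtain G where G: "finite G" "G \<subseteq> \<Union>\<S>" "f ^ n \<in> ring_ideal hull G"
      by (rule in_ideal_hull_finite_subset)
    obtain \<S>' where \<S>': "finite \<S>'" "\<S>' \<subseteq> \<S>" "G \<subseteq> \<Union>\<S>'"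
      using finite_subset_Union[OF G(1,2)] by blast
    have "f \<in> H" if "radical_ideal H" "\<Union>\<S>' \<subseteq> H" for H
    proof -
      have "ring_ideal hull G \<subseteq> H"
        using that \<S>'(3) by (intro hull_minimal) (auto simp: radical_ideal_def)
      then have "f ^ n \<in> H" using G(3) by blast
      then show ?thesis by (rule radical_ideal_power[OF that(1)])
    qed
    with \<S>'(1,2) show "\<exists>\<S>'. finite \<S>' \<and> \<S>' \<subseteq> \<S> \<and> (\<forall>H. radical_ideal H \<and> \<Union>\<S>' \<subseteq> H \<longrightarrow> f \<in> H)"
      by (intro exI[of _ \<S>']) simp
  qed
  then obtain \<S>f where \<S>f: "\<forall>f\<in>F. finite (\<S>f f) \<and> \<S>f f \<subseteq> \<S> \<and>
      (\<forall>H. radical_ideal H \<and> \<Union>(\<S>f f) \<subseteq> H \<longrightarrow> f \<in> H)"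
    by (rule bchoice[THEN exE])
  show ?thesis
  proof (rule that[of "\<Union>(\<S>f ` F)"])
    show "finite (\<Union>(\<S>f ` F))" "\<Union>(\<S>f ` F) \<subseteq> \<S>" using \<S>f \<open>finite F\<close> by auto
    show "\<forall>H. radical_ideal H \<and> \<Union>(\<Union>(\<S>f ` F)) \<subseteq> H \<longrightarrow> F \<subseteq> H"
    proof (intro allI impI subsetI)
      fix H f assume H: "radical_ideal H \<and> \<Union>(\<Union>(\<S>f ` F)) \<subseteq> H" and "f \<in> F"
      then have "\<Union>(\<S>f f) \<subseteq> H" by (meson UN_upper Union_mono order_trans)
      then show "f \<in> H" using \<S>f \<open>f \<in> F\<close> H by simp
    qed
  qed
qed

lemma Rd_one_notin: "H \<in> Rd \<Longrightarrow> 1 \<notin> H"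
  using ring_ideal_one_iff by (auto simp: Rd_def radical_ideal_def)

lemma Spec_subset_Rd: "Spec \<subseteq> Rd"
  using prime_imp_radical_ideal by (auto simp: Spec_def Rd_def prime_ideal_def)

lemma radical_ideal_Rd: "H \<in> Rd \<Longrightarrow> radical_ideal H"
  by (simp add: Rd_def)

lemma Rd_iff_one_notin: "H \<in> Rd \<longleftrightarrow> radical_ideal H \<and> 1 \<notin> H"
  using Rd_one_notin by (auto simp: Rd_def)

lemma Inter_in_Rd:
  assumes "\<H> \<noteq> {}" "\<H> \<subseteq> Rd"
  shows "\<Inter>\<H> \<in> Rd"
proof -
  have "ring_ideal (\<Inter>\<H>)"
    using assms(2) by (intro ring_ideal_Inter) (auto simp: Rd_def radical_ideal_def)
  moreover have "x \<in> \<Inter>\<H>" if "x ^ n \<in> \<Inter>\<H>" for x n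
    using that assms(2) radical_ideal_power radical_ideal_Rd by blast
  moreover have "1 \<notin> \<Inter>\<H>" using assms Rd_one_notin by blast
  ultimately show ?thesis unfolding Rd_iff_one_notin radical_ideal_def by blast
qed

lemma Union_in_Rd:
  assumes "\<H> \<noteq> {}" "\<H> \<subseteq> Rd" and "\<forall>x\<in>\<Union>\<H>. \<forall>y\<in>\<Union>\<H>. \<exists>H\<in>\<H>. x \<in> H \<and> y \<in> H"
  shows "\<Union>\<H> \<in> Rd"
proof -
  have "ring_ideal (\<Union>\<H>)"
    using assms by (intro ring_ideal_Union) (auto simp: Rd_def radical_ideal_def)
  moreover have "x \<in> \<Union>\<H>" if "x ^ n \<in> \<Union>\<H>" for x n
    using that assms(2) radical_ideal_power radical_ideal_Rd by blast
  moreover have "1 \<notin> \<Union>\<H>" using assms(2) Rd_one_notin by blast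
  ultimately show ?thesis unfolding Rd_iff_one_notin radical_ideal_def by blast
qed

definition ideals_above :: "'a set set \<Rightarrow> 'a set \<Rightarrow> 'a set set" where
  "ideals_above \<A> S = {H \<in> \<A>. S \<subseteq> H}"

lemma ideals_above_subset: "ideals_above \<A> S \<subseteq> \<A>"
  by (auto simp: ideals_above_def)

lemma ideals_above_Un: "ideals_above \<A> (S \<union> T) = ideals_above \<A> S \<inter> ideals_above \<A> T"
  by (auto simp: ideals_above_def)

lemma ideals_above_one: "\<A> \<subseteq> Rd \<Longrightarrow> ideals_above \<A> {1} = {}"
  using Rd_one_notin by (auto simp: ideals_above_def)

lemma Rd_eq_Inter_primes_above:
  assumes "H \<in> Rd"
  shows "ideals_above Spec H \<noteq> {}" "\<Inter>(ideals_above Spec H) = H"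
proof -
  have avoid: "\<exists>P\<in>ideals_above Spec H. f \<notin> P" if "f \<notin> H" for f
  proof -
    have "ring_ideal H" "\<forall>n. f ^ n \<notin> H"
      using assms that radical_ideal_power by (auto simp: Rd_def radical_ideal_def)
    then show ?thesis
      using prime_ideal_avoiding_powers by (metis Spec_def ideals_above_def mem_Collect_eq)
  qed
  show "ideals_above Spec H \<noteq> {}" using avoid[OF Rd_one_notin[OF assms]] by blast
  show "\<Inter>(ideals_above Spec H) = H" using avoid by (auto simp: ideals_above_def)
qed

text \<open>With \<open>\<A> = Spec\<close> and \<open>\<A> = Rd\<close> this covers the Zariski and the hull-kernel topology.\<close>

lemma compactin_complement_ideals_above:
  assumes "Spec \<subseteq> \<A>" "\<forall>H\<in>\<A>. radical_ideal H" "finite F" "F \<in> \<Sigma>"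
  shows "compactin (topology_generated_by ((\<lambda>S. \<A> - ideals_above \<A> S) ` \<Sigma>)) (\<A> - ideals_above \<A> F)"
proof (rule compactin_topology_generated_by)
  show "\<A> - ideals_above \<A> F \<subseteq> \<Union>((\<lambda>S. \<A> - ideals_above \<A> S) ` \<Sigma>)"
    using \<open>F \<in> \<Sigma>\<close> by (rule UN_upper)
next
  fix \<C> assume "\<C> \<subseteq> (\<lambda>S. \<A> - ideals_above \<A> S) ` \<Sigma>" and cover: "\<A> - ideals_above \<A> F \<subseteq> \<Union>\<C>"
  then obtain \<S> where "\<S> \<subseteq> \<Sigma>" and \<C>: "\<C> = (\<lambda>S. \<A> - ideals_above \<A> S) ` \<S>"
    by (meson subset_image_iff)
  have "\<forall>P\<in>Spec. \<Union>\<S> \<subseteq> P \<longrightarrow> F \<subseteq> P"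
  proof (intro ballI impI)
    fix P assume "P \<in> Spec" "\<Union>\<S> \<subseteq> P"
    have "P \<in> \<A>" using \<open>P \<in> Spec\<close> \<open>Spec \<subseteq> \<A>\<close> by blast
    moreover have "P \<notin> \<Union>\<C>"
      unfolding \<C> ideals_above_def using \<open>\<Union>\<S> \<subseteq> P\<close> by blast
    ultimately show "F \<subseteq> P" using cover unfolding ideals_above_def by blast
  qed
  then obtain \<S>' where "finite \<S>'" "\<S>' \<subseteq> \<S>"
    and radical: "\<forall>H. radical_ideal H \<and> \<Union>\<S>' \<subseteq> H \<longrightarrow> F \<subseteq> H"
    by (rule finite_radical_subcover[OF \<open>finite F\<close>])
  have "\<A> - ideals_above \<A> F \<subseteq> \<Union>((\<lambda>S. \<A> - ideals_above \<A> S) ` \<S>')"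
  proof
    fix H assume "H \<in> \<A> - ideals_above \<A> F"
    then have "H \<in> \<A>" "\<not> F \<subseteq> H" by (auto simp: ideals_above_def)
    then have "\<not> \<Union>\<S>' \<subseteq> H" using radical assms(2) by blast
    then obtain S where "S \<in> \<S>'" "\<not> S \<subseteq> H" by blast
    then show "H \<in> \<Union>((\<lambda>S. \<A> - ideals_above \<A> S) ` \<S>')"
      using \<open>H \<in> \<A>\<close> by (auto simp: ideals_above_def)
  qed
  then show "\<exists>\<C>'. finite \<C>' \<and> \<C>' \<subseteq> \<C> \<and> \<A> - ideals_above \<A> F \<subseteq> \<Union>\<C>'"
    using \<open>finite \<S>'\<close> \<open>\<S>' \<subseteq> \<S>\<close> \<C> by (intro exI[of _ "(\<lambda>S. \<A> - ideals_above \<A> S) ` \<S>'"]) auto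
qed

section \<open>The Zariski topology on Spec\<close>

lemma zariski_Spec_eq: "zariski_Spec = topology_generated_by (range (\<lambda>S. Spec - ideals_above Spec S))"
  by (simp add: zariski_Spec_def ideals_above_def full_SetCompr_eq)

lemma ideals_above_Spec_products:
  "ideals_above Spec {s * t | s t. s \<in> S \<and> t \<in> T} = ideals_above Spec S \<union> ideals_above Spec T"
proof -
  have key: "{s * t | s t. s \<in> S \<and> t \<in> T} \<subseteq> P \<longleftrightarrow> S \<subseteq> P \<or> T \<subseteq> P" if "prime_ideal P" for P
  proof
    assume prod: "{s * t | s t. s \<in> S \<and> t \<in> T} \<subseteq> P"
    show "S \<subseteq> P \<or> T \<subseteq> P"
    proof (rule ccontr)
      assume "\<not> (S \<subseteq> P \<or> T \<subseteq> P)"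
      then obtain s t where "s \<in> S" "s \<notin> P" "t \<in> T" "t \<notin> P" by blast
      moreover from \<open>s \<in> S\<close> \<open>t \<in> T\<close> prod have "s * t \<in> P" by blast
      ultimately show False using that by (auto simp: prime_ideal_def)
    qed
  next
    assume "S \<subseteq> P \<or> T \<subseteq> P"
    then show "{s * t | s t. s \<in> S \<and> t \<in> T} \<subseteq> P"
      using that ring_ideal_mult_left ring_ideal_mult_right by (fastforce simp: prime_ideal_def)
  qed
  show ?thesis
  proof (rule set_eqI)
    fix P
    show "P \<in> ideals_above Spec {s * t | s t. s \<in> S \<and> t \<in> T}
      \<longleftrightarrow> P \<in> ideals_above Spec S \<union> ideals_above Spec T"
      using key[of P] by (cases "prime_ideal P") (simp_all add: ideals_above_def Spec_def)
  qed
qed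

lemma openin_zariski_Spec: "openin zariski_Spec W \<longleftrightarrow> (\<exists>S. W = Spec - ideals_above Spec S)"
proof
  assume "openin zariski_Spec W"
  then have "generate_topology_on (range (\<lambda>S. Spec - ideals_above Spec S)) W"
    by (simp add: zariski_Spec_eq openin_topology_generated_by_iff)
  then show "\<exists>S. W = Spec - ideals_above Spec S"
  proof induction
    case Empty
    have "Spec - ideals_above Spec {} = {}" by (auto simp: ideals_above_def)
    then show ?case by blast
  next
    case (Int a b)
    then obtain S T where "a = Spec - ideals_above Spec S" "b = Spec - ideals_above Spec T" by blast
    then have "a \<inter> b = Spec - ideals_above Spec {s * t | s t. s \<in> S \<and> t \<in> T}"
      by (simp add: ideals_above_Spec_products Diff_Un)
    then show ?case by blast
  next
    case (UN \<K>)
    then obtain Sf where Sf: "\<forall>k\<in>\<K>. Spec - ideals_above Spec (Sf k) = k" by metis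
    have "\<Union>\<K> = Spec - ideals_above Spec (\<Union>(Sf ` \<K>))"
      using Sf by (auto simp: ideals_above_def)
    then show ?case by blast
  qed blast
next
  assume "\<exists>S. W = Spec - ideals_above Spec S"
  then show "openin zariski_Spec W"
    by (auto simp: zariski_Spec_eq intro: topology_generated_by_Basis)
qed

lemma topspace_zariski_Spec: "topspace zariski_Spec = Spec"
proof -
  have "Spec - ideals_above Spec {1} = (Spec :: 'a::comm_ring_1 set set)"
    by (simp add: ideals_above_one Spec_subset_Rd)
  then show ?thesis by (auto simp: zariski_Spec_eq)
qed

lemma closedin_zariski_Spec: "closedin zariski_Spec C \<longleftrightarrow> (\<exists>S. C = ideals_above Spec S)"
proof -
  have "C = ideals_above Spec S \<longleftrightarrow> C \<subseteq> Spec \<and> Spec - C = Spec - ideals_above Spec S" for S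
    using ideals_above_subset[of Spec S] by blast
  then show ?thesis
    by (simp add: closedin_def topspace_zariski_Spec openin_zariski_Spec)
qed

lemma qc_open_zariski_Spec:
  "qc_open zariski_Spec W \<longleftrightarrow> (\<exists>F. finite F \<and> W = Spec - ideals_above Spec F)"
proof
  assume "qc_open zariski_Spec W"
  then obtain S where S: "W = Spec - ideals_above Spec S" and "compactin zariski_Spec W"
    by (auto simp: qc_open_def openin_zariski_Spec)
  moreover have "W \<subseteq> \<Union>((\<lambda>s. Spec - ideals_above Spec {s}) ` S)"
    using S by (auto simp: ideals_above_def)
  moreover have "\<forall>U\<in>(\<lambda>s. Spec - ideals_above Spec {s}) ` S. openin zariski_Spec U"
    using openin_zariski_Spec by blast
  ultimately obtain \<C> where "finite \<C>" "\<C> \<subseteq> (\<lambda>s. Spec - ideals_above Spec {s}) ` S"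
      and cover: "W \<subseteq> \<Union>\<C>"
    unfolding compactin_def by meson
  then obtain F where F: "F \<subseteq> S" "finite F" "\<C> = (\<lambda>s. Spec - ideals_above Spec {s}) ` F"
    by (meson finite_subset_image)
  have "W = Spec - ideals_above Spec F"
    using S F(1) cover unfolding F(3) by (auto simp: ideals_above_def)
  then show "\<exists>F. finite F \<and> W = Spec - ideals_above Spec F" using F(2) by blast
next
  assume "\<exists>F. finite F \<and> W = Spec - ideals_above Spec F"
  then obtain F where "finite F" and W: "W = Spec - ideals_above Spec F" by blast
  have "compactin zariski_Spec W"
    unfolding zariski_Spec_eq W
    using prime_imp_radical_ideal \<open>finite F\<close>
    by (intro compactin_complement_ideals_above) (auto simp: Spec_def)
  then show "qc_open zariski_Spec W"
    using W openin_zariski_Spec by (auto simp: qc_open_def)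
qed

section \<open>The hull-kernel topology on Rd and its inverse\<close>

lemma hk_Rd_eq: "hk_Rd = topology_generated_by ((\<lambda>F. Rd - ideals_above Rd F) ` {F. finite F})"
  by (simp add: hk_Rd_def ideals_above_def setcompr_eq_image)

lemma topspace_hk_Rd: "topspace hk_Rd = Rd"
proof -
  have "Rd - ideals_above Rd {1} = (Rd :: 'a::comm_ring_1 set set)"
    by (simp add: ideals_above_one)
  then show ?thesis by (auto simp: hk_Rd_eq)
qed

lemma openin_hk_Rd_basic: "finite F \<Longrightarrow> openin hk_Rd (Rd - ideals_above Rd F)"
  unfolding hk_Rd_eq by (rule topology_generated_by_Basis) blast

lemma qc_open_hk_Rd_basic: "finite F \<Longrightarrow> qc_open hk_Rd (Rd - ideals_above Rd F)"
  unfolding qc_open_def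
  using openin_hk_Rd_basic compactin_complement_ideals_above[OF Spec_subset_Rd, of F "{F. finite F}"]
  by (simp add: hk_Rd_eq radical_ideal_Rd)

lemma openin_hk_Rd_down:
  assumes "openin hk_Rd U" "H \<in> U" "H' \<in> Rd" "H' \<subseteq> H"
  shows "H' \<in> U"
proof -
  have "generate_topology_on ((\<lambda>F. Rd - ideals_above Rd F) ` {F. finite F}) U"
    using assms(1) by (simp add: hk_Rd_eq openin_topology_generated_by_iff)
  then show ?thesis
    using assms(2-4) by induction (auto simp: ideals_above_def)
qed

definition inv_hk_Rd :: "'a::comm_ring_1 set topology" where
  "inv_hk_Rd = topology_generated_by (ideals_above Rd ` {F. finite F})"

lemma openin_inv_hk_Rd_basic: "finite F \<Longrightarrow> openin inv_hk_Rd (ideals_above Rd F)"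
  unfolding inv_hk_Rd_def by (rule topology_generated_by_Basis) blast

lemma topspace_inv_hk_Rd: "topspace inv_hk_Rd = Rd"
  using ideals_above_subset[of Rd] by (auto simp: inv_hk_Rd_def ideals_above_def)

lemma openin_inv_hk_Rd:
  "openin inv_hk_Rd U \<longleftrightarrow> U \<subseteq> Rd \<and> (\<forall>H\<in>U. \<exists>F. finite F \<and> F \<subseteq> H \<and> ideals_above Rd F \<subseteq> U)"
proof
  assume "openin inv_hk_Rd U"
  then have "generate_topology_on (ideals_above Rd ` {F. finite F}) U"
    by (simp add: inv_hk_Rd_def openin_topology_generated_by_iff)
  then have "\<forall>H\<in>U. \<exists>F. finite F \<and> F \<subseteq> H \<and> ideals_above Rd F \<subseteq> U"
  proof induction
    case (Int a b)
    show ?case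
    proof
      fix H assume "H \<in> a \<inter> b"
      then obtain F G where "finite F" "F \<subseteq> H" "ideals_above Rd F \<subseteq> a"
        and "finite G" "G \<subseteq> H" "ideals_above Rd G \<subseteq> b"
        using Int.IH by (meson IntD1 IntD2)
      then show "\<exists>F. finite F \<and> F \<subseteq> H \<and> ideals_above Rd F \<subseteq> a \<inter> b"
        by (intro exI[of _ "F \<union> G"]) (auto simp: ideals_above_Un)
    qed
  next
    case (UN \<K>)
    show ?case
    proof
      fix H assume "H \<in> \<Union>\<K>"
      then obtain k where "k \<in> \<K>" "H \<in> k" by blast
      with UN.IH obtain F where "finite F" "F \<subseteq> H" "ideals_above Rd F \<subseteq> k" by meson
      with \<open>k \<in> \<K>\<close> show "\<exists>F. finite F \<and> F \<subseteq> H \<and> ideals_above Rd F \<subseteq> \<Union>\<K>" by blast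
    qed
  qed (auto simp: ideals_above_def)
  then show "U \<subseteq> Rd \<and> (\<forall>H\<in>U. \<exists>F. finite F \<and> F \<subseteq> H \<and> ideals_above Rd F \<subseteq> U)"
    using \<open>openin inv_hk_Rd U\<close> openin_subset topspace_inv_hk_Rd by blast
next
  assume U: "U \<subseteq> Rd \<and> (\<forall>H\<in>U. \<exists>F. finite F \<and> F \<subseteq> H \<and> ideals_above Rd F \<subseteq> U)"
  have "\<exists>T. openin inv_hk_Rd T \<and> H \<in> T \<and> T \<subseteq> U" if "H \<in> U" for H
  proof -
    obtain F where "finite F" "F \<subseteq> H" "ideals_above Rd F \<subseteq> U" using U \<open>H \<in> U\<close> by blast
    moreover have "H \<in> ideals_above Rd F" using U \<open>F \<subseteq> H\<close> \<open>H \<in> U\<close> by (auto simp: ideals_above_def)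
    ultimately show ?thesis using openin_inv_hk_Rd_basic by blast
  qed
  then show "openin inv_hk_Rd U" by (subst openin_subopen) blast
qed

lemma openin_inv_hk_Rd_up: "openin inv_hk_Rd U \<Longrightarrow> H \<in> U \<Longrightarrow> H' \<in> Rd \<Longrightarrow> H \<subseteq> H' \<Longrightarrow> H' \<in> U"
  unfolding openin_inv_hk_Rd ideals_above_def by blast

text \<open>\<open>\<Inter>(ideals_above Rd F)\<close> is the least element of \<open>ideals_above Rd F\<close>, and every open set
  containing it contains all of \<open>ideals_above Rd F\<close>.\<close>

lemma compactin_inv_hk_Rd_basic: "compactin inv_hk_Rd (ideals_above Rd F)"
  unfolding compactin_def
proof (intro conjI allI impI)
  show "ideals_above Rd F \<subseteq> topspace inv_hk_Rd"
    by (simp add: topspace_inv_hk_Rd ideals_above_subset)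
next
  fix \<U> assume \<U>: "(\<forall>U\<in>\<U>. openin inv_hk_Rd U) \<and> ideals_above Rd F \<subseteq> \<Union>\<U>"
  show "\<exists>\<F>. finite \<F> \<and> \<F> \<subseteq> \<U> \<and> ideals_above Rd F \<subseteq> \<Union>\<F>"
  proof (cases "ideals_above Rd F = {}")
    case False
    then have "\<Inter>(ideals_above Rd F) \<in> Rd"
      using ideals_above_subset by (rule Inter_in_Rd)
    then have "\<Inter>(ideals_above Rd F) \<in> ideals_above Rd F"
      by (auto simp: ideals_above_def)
    then obtain U where "U \<in> \<U>" "\<Inter>(ideals_above Rd F) \<in> U" using \<U> by blast
    then have "ideals_above Rd F \<subseteq> U"
      using \<U> openin_inv_hk_Rd_up ideals_above_subset by (metis Inter_lower subsetD subsetI)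
    then show ?thesis using \<open>U \<in> \<U>\<close> by (intro exI[of _ "{U}"]) auto
  qed blast
qed

lemma qc_open_inv_hk_Rd:
  "qc_open inv_hk_Rd U \<longleftrightarrow> (\<exists>\<F>. finite \<F> \<and> (\<forall>F\<in>\<F>. finite F) \<and> U = \<Union>(ideals_above Rd ` \<F>))"
proof
  assume "qc_open inv_hk_Rd U"
  then have "openin inv_hk_Rd U" and "compactin inv_hk_Rd U" by (auto simp: qc_open_def)
  then have "U \<subseteq> Rd" and up: "\<forall>H\<in>U. \<exists>F. finite F \<and> F \<subseteq> H \<and> ideals_above Rd F \<subseteq> U"
    by (simp_all add: openin_inv_hk_Rd)
  define \<F>\<^sub>0 where "\<F>\<^sub>0 = {F. finite F \<and> ideals_above Rd F \<subseteq> U}"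
  have "U \<subseteq> \<Union>(ideals_above Rd ` \<F>\<^sub>0)"
  proof
    fix H assume "H \<in> U"
    then obtain F where "finite F" "F \<subseteq> H" "ideals_above Rd F \<subseteq> U"
      using up by blast
    moreover have "H \<in> Rd" using \<open>H \<in> U\<close> \<open>U \<subseteq> Rd\<close> by blast
    ultimately show "H \<in> \<Union>(ideals_above Rd ` \<F>\<^sub>0)" by (auto simp: \<F>\<^sub>0_def ideals_above_def)
  qed
  moreover have "\<forall>V\<in>ideals_above Rd ` \<F>\<^sub>0. openin inv_hk_Rd V"
    using openin_inv_hk_Rd_basic by (auto simp: \<F>\<^sub>0_def)
  ultimately obtain \<C> where "finite \<C>" "\<C> \<subseteq> ideals_above Rd ` \<F>\<^sub>0" "U \<subseteq> \<Union>\<C>"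
    using \<open>compactin inv_hk_Rd U\<close> unfolding compactin_def by meson
  then obtain \<F> where "\<F> \<subseteq> \<F>\<^sub>0" "finite \<F>" "\<C> = ideals_above Rd ` \<F>"
    by (meson finite_subset_image)
  then have "U = \<Union>(ideals_above Rd ` \<F>)" "\<forall>F\<in>\<F>. finite F"
    using \<open>U \<subseteq> \<Union>\<C>\<close> by (auto simp: \<F>\<^sub>0_def)
  then show "\<exists>\<F>. finite \<F> \<and> (\<forall>F\<in>\<F>. finite F) \<and> U = \<Union>(ideals_above Rd ` \<F>)"
    using \<open>finite \<F>\<close> by blast
next
  assume "\<exists>\<F>. finite \<F> \<and> (\<forall>F\<in>\<F>. finite F) \<and> U = \<Union>(ideals_above Rd ` \<F>)"
  then obtain \<F> where "finite \<F>" "\<forall>F\<in>\<F>. finite F" and U: "U = \<Union>(ideals_above Rd ` \<F>)"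
    by blast
  then have "openin inv_hk_Rd U" "compactin inv_hk_Rd U"
    unfolding U using openin_inv_hk_Rd_basic compactin_inv_hk_Rd_basic
    by (auto intro: compactin_Union)
  then show "qc_open inv_hk_Rd U" by (simp add: qc_open_def)
qed

lemma closedin_inv_hk_Rd_basic: "finite F \<Longrightarrow> closedin inv_hk_Rd (Rd - ideals_above Rd F)"
  using openin_inv_hk_Rd_basic ideals_above_subset[of Rd F]
  by (simp add: closedin_def topspace_inv_hk_Rd double_diff)

lemma closedin_inv_hk_Rd_down:
  assumes "closedin inv_hk_Rd C" "H \<in> C" "H' \<in> Rd" "H' \<subseteq> H"
  shows "H' \<in> C"
proof (rule ccontr)
  assume "H' \<notin> C"
  have "openin inv_hk_Rd (Rd - C)" "H \<in> Rd"
    using assms(1,2) closedin_subset by (fastforce simp: closedin_def topspace_inv_hk_Rd)+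
  then have "H \<in> Rd - C"
    using openin_inv_hk_Rd_up \<open>H' \<notin> C\<close> assms(3,4) by blast
  then show False using assms(2) by blast
qed

lemma closure_of_inv_hk_Rd_singleton:
  assumes "H \<in> Rd"
  shows "inv_hk_Rd closure_of {H} = {H' \<in> Rd. H' \<subseteq> H}"
proof
  show "inv_hk_Rd closure_of {H} \<subseteq> {H' \<in> Rd. H' \<subseteq> H}"
  proof
    fix H' assume H': "H' \<in> inv_hk_Rd closure_of {H}"
    then have "H' \<in> Rd" by (simp add: closure_of_def topspace_inv_hk_Rd)
    have "a \<in> H" if "a \<in> H'" for a
    proof -
      have "H' \<in> ideals_above Rd {a}" using \<open>H' \<in> Rd\<close> that by (simp add: ideals_above_def)
      then have "H \<in> ideals_above Rd {a}"
        using H' openin_inv_hk_Rd_basic[of "{a}"] unfolding closure_of_def by blast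
      then show ?thesis by (simp add: ideals_above_def)
    qed
    with \<open>H' \<in> Rd\<close> show "H' \<in> {H' \<in> Rd. H' \<subseteq> H}" by blast
  qed
  show "{H' \<in> Rd. H' \<subseteq> H} \<subseteq> inv_hk_Rd closure_of {H}"
  proof
    fix H' assume "H' \<in> {H' \<in> Rd. H' \<subseteq> H}"
    moreover have "H \<in> inv_hk_Rd closure_of {H}"
      using closure_of_subset[of "{H}" inv_hk_Rd] assms by (simp add: topspace_inv_hk_Rd)
    ultimately show "H' \<in> inv_hk_Rd closure_of {H}"
      using closedin_inv_hk_Rd_down[OF closedin_closure_of] by blast
  qed
qed

lemma irreducible_in_inv_hk_Rd_directed:
  assumes "irreducible_in inv_hk_Rd C" "finite F" "F \<subseteq> \<Union>C"
  shows "\<exists>H\<in>C. F \<subseteq> H"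
  using assms(2,3)
proof (induction F rule: finite_induct)
  case empty
  then show ?case using assms(1) by (auto simp: irreducible_in_def)
next
  case (insert x F)
  obtain H1 where "H1 \<in> C" "x \<in> H1" using insert.prems by blast
  obtain H2 where "H2 \<in> C" "F \<subseteq> H2" using insert.IH insert.prems by blast
  have "C \<subseteq> Rd" using assms(1) by (simp add: irreducible_in_def topspace_inv_hk_Rd)
  show ?case
  proof (rule ccontr)
    assume "\<not> (\<exists>H\<in>C. insert x F \<subseteq> H)"
    then have "C \<subseteq> (Rd - ideals_above Rd {x}) \<union> (Rd - ideals_above Rd F)"
      using \<open>C \<subseteq> Rd\<close> by (auto simp: ideals_above_def)
    then have "C \<subseteq> Rd - ideals_above Rd {x} \<or> C \<subseteq> Rd - ideals_above Rd F"
      using assms(1) closedin_inv_hk_Rd_basic insert.hyps(1)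
      unfolding irreducible_in_def by (meson finite.emptyI finite.insertI)
    then show False
      using \<open>H1 \<in> C\<close> \<open>x \<in> H1\<close> \<open>H2 \<in> C\<close> \<open>F \<subseteq> H2\<close> \<open>C \<subseteq> Rd\<close> by (auto simp: ideals_above_def)
  qed
qed

lemma generic_point_inv_hk_Rd:
  assumes C: "closedin inv_hk_Rd C" "irreducible_in inv_hk_Rd C"
  shows "\<Union>C \<in> C" "inv_hk_Rd closure_of {\<Union>C} = C"
proof -
  have "C \<subseteq> Rd" "C \<noteq> {}" using C(2) by (auto simp: irreducible_in_def topspace_inv_hk_Rd)
  have directed: "\<exists>H\<in>C. F \<subseteq> H" if "finite F" "F \<subseteq> \<Union>C" for F
    using irreducible_in_inv_hk_Rd_directed[OF C(2) that] .
  have "\<Union>C \<in> Rd"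
  proof (rule Union_in_Rd)
    show "\<forall>x\<in>\<Union>C. \<forall>y\<in>\<Union>C. \<exists>H\<in>C. x \<in> H \<and> y \<in> H"
      using directed[of "{x, y}" for x y] by auto
  qed fact+
  show "\<Union>C \<in> C"
  proof (rule ccontr)
    assume "\<Union>C \<notin> C"
    have "openin inv_hk_Rd (Rd - C)" using C(1) by (simp add: closedin_def topspace_inv_hk_Rd)
    then obtain F where "finite F" "F \<subseteq> \<Union>C" "ideals_above Rd F \<subseteq> Rd - C"
      using \<open>\<Union>C \<in> Rd\<close> \<open>\<Union>C \<notin> C\<close> unfolding openin_inv_hk_Rd by blast
    moreover obtain H where "H \<in> C" "F \<subseteq> H" using directed \<open>finite F\<close> \<open>F \<subseteq> \<Union>C\<close> by blast
    ultimately show False using \<open>C \<subseteq> Rd\<close> by (auto simp: ideals_above_def)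
  qed
  then show "inv_hk_Rd closure_of {\<Union>C} = C"
    using \<open>\<Union>C \<in> Rd\<close> \<open>C \<subseteq> Rd\<close> closedin_inv_hk_Rd_down[OF C(1)]
    by (auto simp: closure_of_inv_hk_Rd_singleton)
qed

lemma spectral_space_inv_hk_Rd: "spectral_space (inv_hk_Rd :: 'a::comm_ring_1 set topology)"
  unfolding spectral_space_def
proof (intro conjI allI impI)
  show "compact_space inv_hk_Rd"
    using compactin_inv_hk_Rd_basic[of "{}"]
    by (simp add: compact_space_def topspace_inv_hk_Rd ideals_above_def)
next
  show "t0_space inv_hk_Rd"
    unfolding t0_space_def topspace_inv_hk_Rd
  proof (intro ballI impI)
    fix H H' assume "H \<in> Rd" "H' \<in> Rd" "H \<noteq> H'"
    then obtain a where "a \<in> H \<and> a \<notin> H' \<or> a \<in> H' \<and> a \<notin> H" by blast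
    then show "\<exists>U. openin inv_hk_Rd U \<and> (H \<notin> U \<longleftrightarrow> H' \<in> U)"
      using \<open>H \<in> Rd\<close> \<open>H' \<in> Rd\<close> openin_inv_hk_Rd_basic[of "{a}"]
      by (intro exI[of _ "ideals_above Rd {a}"]) (auto simp: ideals_above_def)
  qed
next
  fix U V :: "'a set set" assume "qc_open inv_hk_Rd U \<and> qc_open inv_hk_Rd V"
  then obtain \<F> \<G> :: "'a set set" where \<F>: "finite \<F>" "\<forall>F\<in>\<F>. finite F" "U = \<Union>(ideals_above Rd ` \<F>)"
    and \<G>: "finite \<G>" "\<forall>G\<in>\<G>. finite G" "V = \<Union>(ideals_above Rd ` \<G>)"
    unfolding qc_open_inv_hk_Rd by blast
  define \<H> where "\<H> = (\<lambda>(F, G). F \<union> G) ` (\<F> \<times> \<G>)"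
  have "U \<inter> V = \<Union>(ideals_above Rd ` \<H>)"
    unfolding \<F>(3) \<G>(3) \<H>_def by (auto simp: ideals_above_Un)
  moreover have "finite \<H>" "\<forall>H\<in>\<H>. finite H" using \<F> \<G> unfolding \<H>_def by auto
  ultimately show "qc_open inv_hk_Rd (U \<inter> V)" unfolding qc_open_inv_hk_Rd by blast
next
  fix U H assume "openin inv_hk_Rd U \<and> H \<in> U"
  then obtain F where "finite F" "F \<subseteq> H" "ideals_above Rd F \<subseteq> U" "H \<in> Rd"
    unfolding openin_inv_hk_Rd by blast
  then show "\<exists>V. qc_open inv_hk_Rd V \<and> H \<in> V \<and> V \<subseteq> U"
    using openin_inv_hk_Rd_basic compactin_inv_hk_Rd_basic
    by (intro exI[of _ "ideals_above Rd F"]) (auto simp: qc_open_def ideals_above_def)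
next
  fix C assume C: "closedin inv_hk_Rd C \<and> irreducible_in inv_hk_Rd C"
  show "\<exists>!H. H \<in> C \<and> inv_hk_Rd closure_of {H} = C"
  proof (rule ex1I[of _ "\<Union>C"])
    show "\<Union>C \<in> C \<and> inv_hk_Rd closure_of {\<Union>C} = C"
      using generic_point_inv_hk_Rd C by blast
  next
    fix H assume H: "H \<in> C \<and> inv_hk_Rd closure_of {H} = C"
    have "C \<subseteq> Rd" using C closedin_subset[of inv_hk_Rd C] by (simp add: topspace_inv_hk_Rd)
    with H have "H \<in> Rd" by blast
    with \<open>C \<subseteq> Rd\<close> show "H = \<Union>C"
      using H closure_of_inv_hk_Rd_singleton[of H] by blast
  qed
qed

text \<open>A quasi-compact open set of \<open>hk_Rd\<close> is down-closed; covering it by the sets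
  \<open>Rd - ideals_above Rd {x}\<close> with \<open>x \<in> H\<close>, for \<open>H\<close> outside it, yields a finite \<open>F \<subseteq> H\<close>
  with \<open>ideals_above Rd F\<close> disjoint from it.\<close>

lemma openin_inv_hk_Rd_complement:
  assumes "qc_open hk_Rd U"
  shows "openin inv_hk_Rd (Rd - U)"
  unfolding openin_inv_hk_Rd
proof (intro conjI ballI)
  have "openin hk_Rd U" "compactin hk_Rd U" using assms by (auto simp: qc_open_def)
  fix H assume H: "H \<in> Rd - U"
  have "\<exists>x. x \<in> H \<and> x \<notin> K" if "K \<in> U" for K
    using openin_hk_Rd_down[OF \<open>openin hk_Rd U\<close> that] H by blast
  then obtain x where x: "\<And>K. K \<in> U \<Longrightarrow> x K \<in> H \<and> x K \<notin> K" by metis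
  have "U \<subseteq> Rd" using \<open>openin hk_Rd U\<close> openin_subset topspace_hk_Rd by blast
  then have "U \<subseteq> \<Union>((\<lambda>K. Rd - ideals_above Rd {x K}) ` U)"
    using x by (fastforce simp: ideals_above_def)
  moreover have "\<forall>V\<in>(\<lambda>K. Rd - ideals_above Rd {x K}) ` U. openin hk_Rd V"
    using openin_hk_Rd_basic by blast
  ultimately obtain \<C> where "finite \<C>" "\<C> \<subseteq> (\<lambda>K. Rd - ideals_above Rd {x K}) ` U" "U \<subseteq> \<Union>\<C>"
    using \<open>compactin hk_Rd U\<close> unfolding compactin_def by meson
  then obtain \<K> where "\<K> \<subseteq> U" "finite \<K>" "\<C> = (\<lambda>K. Rd - ideals_above Rd {x K}) ` \<K>"
    by (meson finite_subset_image)
  with \<open>U \<subseteq> \<Union>\<C>\<close> have cover: "U \<subseteq> (\<Union>K\<in>\<K>. Rd - ideals_above Rd {x K})"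
    by simp
  have "ideals_above Rd (x ` \<K>) \<subseteq> Rd - U"
    using cover by (auto simp: ideals_above_def)
  moreover have "x ` \<K> \<subseteq> H" using x \<open>\<K> \<subseteq> U\<close> by blast
  ultimately show "\<exists>F. finite F \<and> F \<subseteq> H \<and> ideals_above Rd F \<subseteq> Rd - U"
    using \<open>finite \<K>\<close> by blast
qed blast

lemma inverse_topology_hk_Rd: "inverse_topology hk_Rd = inv_hk_Rd"
  unfolding inverse_topology_def topspace_hk_Rd inv_hk_Rd_def
proof (rule topology_generated_by_eq)
  fix a assume "a \<in> {Rd - U | U. qc_open hk_Rd U}"
  then show "openin (topology_generated_by (ideals_above Rd ` {F. finite F})) a"
    using openin_inv_hk_Rd_complement by (auto simp: inv_hk_Rd_def)
next
  fix b assume "b \<in> ideals_above Rd ` {F. finite F}"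
  then obtain F where "finite F" "b = Rd - (Rd - ideals_above Rd F)"
    using ideals_above_subset by blast
  then show "openin (topology_generated_by {Rd - U | U. qc_open hk_Rd U}) b"
    using qc_open_hk_Rd_basic by (auto intro: topology_generated_by_Basis)
qed

lemma inverse_topology_inv_hk_Rd: "inverse_topology inv_hk_Rd = hk_Rd"
  unfolding inverse_topology_def topspace_inv_hk_Rd hk_Rd_eq
proof (rule topology_generated_by_eq)
  fix a assume "a \<in> {Rd - U | U. qc_open inv_hk_Rd U}"
  then obtain \<F> where "finite \<F>" "\<forall>F\<in>\<F>. finite F" and a: "a = Rd - \<Union>(ideals_above Rd ` \<F>)"
    unfolding qc_open_inv_hk_Rd by blast
  show "openin (topology_generated_by ((\<lambda>F. Rd - ideals_above Rd F) ` {F. finite F})) a"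
  proof (cases "\<F> = {}")
    case True
    have "openin hk_Rd Rd" using openin_topspace[of hk_Rd] by (simp only: topspace_hk_Rd)
    then show ?thesis using a True by (simp add: hk_Rd_eq)
  next
    case False
    then have "a = (\<Inter>F\<in>\<F>. Rd - ideals_above Rd F)" using a by blast
    moreover have "openin hk_Rd (\<Inter>F\<in>\<F>. Rd - ideals_above Rd F)"
      using \<open>finite \<F>\<close> \<open>\<forall>F\<in>\<F>. finite F\<close> False openin_hk_Rd_basic by (intro openin_Inter) auto
    ultimately show ?thesis by (simp add: hk_Rd_eq)
  qed
next
  fix b assume "b \<in> (\<lambda>F. Rd - ideals_above Rd F) ` {F. finite F}"
  then obtain F where "finite F" "b = Rd - ideals_above Rd F" by blast
  moreover have "qc_open inv_hk_Rd (ideals_above Rd F)"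
    using \<open>finite F\<close> by (simp add: qc_open_def openin_inv_hk_Rd_basic compactin_inv_hk_Rd_basic)
  ultimately show "openin (topology_generated_by {Rd - U | U. qc_open inv_hk_Rd U}) b"
    by (auto intro: topology_generated_by_Basis)
qed

section \<open>Nonempty closed subsets of Spec\<close>

lemma Xprime_zariski_Spec_iff:
  "Y \<in> Xprime zariski_Spec \<longleftrightarrow> (\<exists>S. Y = ideals_above Spec S) \<and> Y \<noteq> {}"
  by (simp add: Xprime_def closedin_zariski_Spec)

lemma Xprime_subset_Spec: "Y \<in> Xprime zariski_Spec \<Longrightarrow> Y \<subseteq> Spec"
  using ideals_above_subset unfolding Xprime_zariski_Spec_iff by blast

lemma Inter_Xprime_in_Rd: "Y \<in> Xprime zariski_Spec \<Longrightarrow> \<Inter>Y \<in> Rd"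
  using Inter_in_Rd Spec_subset_Rd ideals_above_subset
  unfolding Xprime_zariski_Spec_iff by (metis order_trans)

lemma ideals_above_Inter_Xprime: "Y \<in> Xprime zariski_Spec \<Longrightarrow> ideals_above Spec (\<Inter>Y) = Y"
  unfolding Xprime_zariski_Spec_iff ideals_above_def by blast

lemma ideals_above_Spec_in_Xprime: "H \<in> Rd \<Longrightarrow> ideals_above Spec H \<in> Xprime zariski_Spec"
  using Rd_eq_Inter_primes_above(1) by (auto simp: Xprime_zariski_Spec_iff)

text \<open>For \<open>W = Spec - ideals_above Spec F\<close>, a closed set \<open>Y\<close> avoids \<open>W\<close> iff \<open>F \<subseteq> \<Inter>Y\<close>.\<close>

lemma Xprime_zar_zariski_Spec_eq:
  "Xprime_zar zariski_Spec
     = topology_generated_by ((\<lambda>F. {Y \<in> Xprime zariski_Spec. F \<subseteq> \<Inter>Y}) ` {F. finite F})"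
proof -
  have avoid: "Y \<inter> (Spec - ideals_above Spec F) = {} \<longleftrightarrow> F \<subseteq> \<Inter>Y" if "Y \<subseteq> Spec" for Y F
    using that by (auto simp: ideals_above_def)
  have eq: "{Y \<in> Xprime zariski_Spec. Y \<inter> (Spec - ideals_above Spec F) = {}}
      = {Y \<in> Xprime zariski_Spec. F \<subseteq> \<Inter>Y}" for F :: "'a::comm_ring_1 set"
  proof (rule Collect_cong)
    fix Y show "Y \<in> Xprime zariski_Spec \<and> Y \<inter> (Spec - ideals_above Spec F) = {}
        \<longleftrightarrow> Y \<in> Xprime zariski_Spec \<and> F \<subseteq> \<Inter>Y"
      using avoid[of Y F] Xprime_subset_Spec[of Y] by blast
  qed
  have qc: "{W. qc_open zariski_Spec W} = (\<lambda>F. Spec - ideals_above Spec F) ` {F::'a set. finite F}"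
    by (auto simp: qc_open_zariski_Spec)
  show ?thesis
    unfolding Xprime_zar_def qc image_image eq ..
qed

lemma topspace_Xprime_zar_zariski_Spec:
  "topspace (Xprime_zar zariski_Spec) = Xprime (zariski_Spec :: 'a::comm_ring_1 set topology)"
proof -
  have "{Y \<in> Xprime zariski_Spec. {} \<subseteq> \<Inter>Y} = Xprime (zariski_Spec :: 'a set topology)" by simp
  then show ?thesis unfolding Xprime_zar_zariski_Spec_eq by force
qed

lemma homeomorphic_maps_Xprime_inv_hk_Rd:
  "homeomorphic_maps (Xprime_zar zariski_Spec) inv_hk_Rd Inter (ideals_above Spec)"
  unfolding homeomorphic_maps_def
proof (intro conjI ballI)
  show "continuous_map (Xprime_zar zariski_Spec) inv_hk_Rd Inter"
    unfolding inv_hk_Rd_def continuous_on_generated_topo_iff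
  proof (intro conjI allI impI)
    fix U assume "U \<in> ideals_above Rd ` {F. finite F}"
    then obtain F where "finite F" "U = ideals_above Rd F" by blast
    then have "Inter -` U \<inter> topspace (Xprime_zar zariski_Spec) = {Y \<in> Xprime zariski_Spec. F \<subseteq> \<Inter>Y}"
      using Inter_Xprime_in_Rd by (auto simp: topspace_Xprime_zar_zariski_Spec ideals_above_def)
    then show "openin (Xprime_zar zariski_Spec) (Inter -` U \<inter> topspace (Xprime_zar zariski_Spec))"
      unfolding Xprime_zar_zariski_Spec_eq using \<open>finite F\<close> by (auto intro: topology_generated_by_Basis)
  next
    show "Inter ` topspace (Xprime_zar zariski_Spec) \<subseteq> \<Union>(ideals_above Rd ` {F. finite F})"
      using Inter_Xprime_in_Rd by (auto simp: topspace_Xprime_zar_zariski_Spec ideals_above_def)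
  qed
next
  show "continuous_map inv_hk_Rd (Xprime_zar zariski_Spec) (ideals_above Spec)"
    unfolding Xprime_zar_zariski_Spec_eq continuous_on_generated_topo_iff
  proof (intro conjI allI impI)
    fix U assume "U \<in> (\<lambda>F. {Y \<in> Xprime zariski_Spec. F \<subseteq> \<Inter>Y}) ` {F. finite F}"
    then obtain F where "finite F" and U: "U = {Y \<in> Xprime zariski_Spec. F \<subseteq> \<Inter>Y}" by blast
    have "ideals_above Spec -` U \<inter> topspace inv_hk_Rd = ideals_above Rd F"
    proof (rule set_eqI)
      fix H show "H \<in> ideals_above Spec -` U \<inter> topspace inv_hk_Rd \<longleftrightarrow> H \<in> ideals_above Rd F"
        by (cases "H \<in> Rd") (simp_all add: U topspace_inv_hk_Rd ideals_above_Spec_in_Xprime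
            Rd_eq_Inter_primes_above(2) ideals_above_def[of Rd])
    qed
    then show "openin inv_hk_Rd (ideals_above Spec -` U \<inter> topspace inv_hk_Rd)"
      using openin_inv_hk_Rd_basic \<open>finite F\<close> by simp
  next
    show "ideals_above Spec ` topspace inv_hk_Rd
        \<subseteq> \<Union>((\<lambda>F. {Y \<in> Xprime zariski_Spec. F \<subseteq> \<Inter>Y}) ` {F. finite F})"
      using ideals_above_Spec_in_Xprime by (auto simp: topspace_inv_hk_Rd)
  qed
next
  fix Y assume "Y \<in> topspace (Xprime_zar zariski_Spec)"
  then show "ideals_above Spec (\<Inter>Y) = Y"
    by (simp add: topspace_Xprime_zar_zariski_Spec ideals_above_Inter_Xprime)
next
  fix H assume "H \<in> topspace inv_hk_Rd"
  then show "\<Inter>(ideals_above Spec H) = H"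
    by (simp add: topspace_inv_hk_Rd Rd_eq_Inter_primes_above(2))
qed

theorem theorem4p1:
  shows "homeomorphic_map (Xprime_zar (zariski_Spec :: 'a::comm_ring_1 set topology))
            (inverse_topology (hk_Rd :: 'a set topology)) (\<lambda>C. \<Inter> C)
       \<and> spectral_space (Xprime_zar (zariski_Spec :: 'a set topology))
       \<and> homeomorphic_map (inverse_topology (Xprime_zar (zariski_Spec :: 'a set topology)))
            (hk_Rd :: 'a set topology) (\<lambda>C. \<Inter> C)"
proof -
  have "homeomorphic_maps (Xprime_zar (zariski_Spec :: 'a set topology)) inv_hk_Rd Inter (ideals_above Spec)"
    by (rule homeomorphic_maps_Xprime_inv_hk_Rd)
  then have J: "homeomorphic_map (Xprime_zar (zariski_Spec :: 'a set topology)) inv_hk_Rd Inter"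
    and J_inv: "homeomorphic_map inv_hk_Rd (Xprime_zar (zariski_Spec :: 'a set topology)) (ideals_above Spec)"
    by (auto simp: homeomorphic_maps_map)
  have "spectral_space (Xprime_zar (zariski_Spec :: 'a set topology))"
    using spectral_space_homeomorphic_image[OF J_inv spectral_space_inv_hk_Rd] .
  moreover have "homeomorphic_map (inverse_topology (Xprime_zar zariski_Spec)) (hk_Rd :: 'a set topology) Inter"
    using homeomorphic_map_inverse_topology[OF J] by (simp only: inverse_topology_inv_hk_Rd)
  ultimately show ?thesis
    using J by (simp add: inverse_topology_hk_Rd)
qed

end
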